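(* Suppose $S$ is $(K,\mu,\alpha)$-decaying and $V$ is $(J,\mu,\beta)$-decaying for some $\alpha,\beta\ge4$. Then $[S,V]$ has a local decomposition which is $(cKJ,\mu)$-decaying (i.e. $(cKJ,\mu,0)$-decaying) for some constant $c$ (independent of $L,K,J,\mu$).
   Context: Let $\Lambda=\mathbb{Z}_L\times\mathbb{Z}_L$ (periodic boundary conditions), each site carrying a finite-dimensional Hilbert space, $\mathcal{H}$ their tensor product. For $r\ge1$, $\mathcal{S}(r)$ is the set of all $r\times r$ square blocks of sites ($\mathcal{S}(L)=\{\Lambda\}$, $\mathcal{S}(r)=\emptyset$ for $r>L$). A local decomposition of an operator $V$ on $\mathcal{H}$ is a family $\{V_{r,A}\}$, $r\ge1$, $A\in\mathcal{S}(r)$, with $V_{r,A}$ supported on $A$ and $V=\sum_{r\ge1}\sum_{A\in\mathcal{S}(r)}V_{r,A}$. It is $(J,\mu,\alpha)$-decaying if $\max_{r\ge1}\max_{A\in\mathcal{S}(r)}\|V_{r,A}\|\,r^{\alpha}e^{\mu r}\le J$; an operator is called $(J,\mu,\alpha)$-decaying if it has such a local decomposition, and $(J,\mu)$-decaying means $(J,\mu,0)$-decaying. *)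

theory Defs
  imports Complex_Main
begin

text \<open>Sites of the torus Z_L x Z_L are represented by pairs (i,j) with i,j < L.
  Site x carries the Hilbert space C^(d x); a basis configuration of the tensor
  product is a function sigma with sigma x < d x on sites (and 0 elsewhere).
  Operators on the tensor product are matrices indexed by configurations.\<close>

type_synonym site = "nat \<times> nat"
type_synonym config = "site \<Rightarrow> nat"
type_synonym op = "config \<Rightarrow> config \<Rightarrow> complex"

definition sites :: "nat \<Rightarrow> site set" where
  "sites L = {0..<L} \<times> {0..<L}"

definition configs :: "nat \<Rightarrow> (site \<Rightarrow> nat) \<Rightarrow> config set" where
  "configs L d = {\<sigma>. (\<forall>x\<in>sites L. \<sigma> x < d x) \<and> (\<forall>x. x \<notin> sites L \<longrightarrow> \<sigma> x = 0)}"

text \<open>Operator product and commutator (only entries indexed by configurations matter).\<close>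
definition op_mult :: "nat \<Rightarrow> (site \<Rightarrow> nat) \<Rightarrow> op \<Rightarrow> op \<Rightarrow> op" where
  "op_mult L d M N = (\<lambda>\<sigma> \<tau>. \<Sum>\<rho>\<in>configs L d. M \<sigma> \<rho> * N \<rho> \<tau>)"

definition commutator :: "nat \<Rightarrow> (site \<Rightarrow> nat) \<Rightarrow> op \<Rightarrow> op \<Rightarrow> op" where
  "commutator L d M N = (\<lambda>\<sigma> \<tau>. op_mult L d M N \<sigma> \<tau> - op_mult L d N M \<sigma> \<tau>)"

definition op_norm :: "nat \<Rightarrow> (site \<Rightarrow> nat) \<Rightarrow> op \<Rightarrow> real" where
  "op_norm L d M = Sup {sqrt (\<Sum>\<sigma>\<in>configs L d. (cmod (\<Sum>\<tau>\<in>configs L d. M \<sigma> \<tau> * v \<tau>))\<^sup>2) | v.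
                          (\<Sum>\<tau>\<in>configs L d. (cmod (v \<tau>))\<^sup>2) \<le> 1}"

text \<open>M is supported on A: M = X \<otimes> Id on the complement of A.\<close>
definition supported_on :: "nat \<Rightarrow> (site \<Rightarrow> nat) \<Rightarrow> site set \<Rightarrow> op \<Rightarrow> bool" where
  "supported_on L d A M \<longleftrightarrow>
     (\<forall>\<sigma>\<in>configs L d. \<forall>\<tau>\<in>configs L d.
        (\<exists>x\<in>sites L - A. \<sigma> x \<noteq> \<tau> x) \<longrightarrow> M \<sigma> \<tau> = 0) \<and>
     (\<forall>\<sigma>\<in>configs L d. \<forall>\<tau>\<in>configs L d. \<forall>\<sigma>'\<in>configs L d. \<forall>\<tau>'\<in>configs L d.
        (\<forall>x\<in>A. \<sigma> x = \<sigma>' x \<and> \<tau> x = \<tau>' x) \<and>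
        (\<forall>x\<in>sites L - A. \<sigma> x = \<tau> x \<and> \<sigma>' x = \<tau>' x) \<longrightarrow> M \<sigma> \<tau> = M \<sigma>' \<tau>')"

text \<open>r x r blocks on the torus; S(r) is empty for r > L, and S(L) = {Lambda}.\<close>
definition block :: "nat \<Rightarrow> nat \<Rightarrow> site \<Rightarrow> site set" where
  "block L r x = {((fst x + i) mod L, (snd x + j) mod L) | i j. i < r \<and> j < r}"

definition blocks :: "nat \<Rightarrow> nat \<Rightarrow> site set set" where
  "blocks L r = (if r \<le> L then block L r ` sites L else {})"

definition local_decomp :: "nat \<Rightarrow> (site \<Rightarrow> nat) \<Rightarrow> (nat \<Rightarrow> site set \<Rightarrow> op) \<Rightarrow> op \<Rightarrow> bool" where
  "local_decomp L d W V \<longleftrightarrow>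
     (\<forall>r\<ge>1. \<forall>A\<in>blocks L r. supported_on L d A (W r A)) \<and>
     (\<forall>\<sigma>\<in>configs L d. \<forall>\<tau>\<in>configs L d.
        V \<sigma> \<tau> = (\<Sum>r\<in>{1..L}. \<Sum>A\<in>blocks L r. W r A \<sigma> \<tau>))"

definition decaying_decomp :: "nat \<Rightarrow> (site \<Rightarrow> nat) \<Rightarrow> (nat \<Rightarrow> site set \<Rightarrow> op) \<Rightarrow> real \<Rightarrow> real \<Rightarrow> real \<Rightarrow> bool" where
  "decaying_decomp L d W J \<mu> \<alpha> \<longleftrightarrow>
     (\<forall>r\<ge>1. \<forall>A\<in>blocks L r. op_norm L d (W r A) * real r powr \<alpha> * exp (\<mu> * real r) \<le> J)"

definition decaying :: "nat \<Rightarrow> (site \<Rightarrow> nat) \<Rightarrow> op \<Rightarrow> real \<Rightarrow> real \<Rightarrow> real \<Rightarrow> bool" where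
  "decaying L d V J \<mu> \<alpha> \<longleftrightarrow> (\<exists>W. local_decomp L d W V \<and> decaying_decomp L d W J \<mu> \<alpha>)"

end

theory Submission
  imports Defs "HOL-Analysis.L2_Norm" "HOL-Library.FuncSet"
begin

text \<open>Expanding both local decompositions, \<open>[S, V]\<close> is the sum of the commutators
  \<open>[S\<^sub>r\<^sub>A, V\<^sub>s\<^sub>B]\<close>, and those with disjoint supports vanish.
  Each remaining pair is collected into a block \<open>C\<close> of side \<open>R = min (r + s - 1) L\<close> containing
  \<open>A \<union> B\<close>; since \<open>R \<le> r + s\<close>, its norm times \<open>exp (\<mu> R)\<close> is at most \<open>2 K J / (r s)\<^sup>4\<close>.
  For fixed \<open>C\<close>, \<open>r\<close> and \<open>s\<close> the blocks \<open>A\<close> and \<open>B\<close> are determined by their corners,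
  which lie in \<open>C\<close>, so at most \<open>R\<^sup>4\<close> pairs contribute. As \<open>R\<^sup>4 \<le> 8 (r\<^sup>4 + s\<^sup>4)\<close> and, for fixed
  \<open>r\<close>, at most \<open>r\<close> sizes \<open>s\<close> lead to the same \<open>R\<close>, the weights \<open>R\<^sup>4 / (r s)\<^sup>4\<close> sum to at
  most 32, which gives the constant \<open>c = 64\<close>.\<close>

definition op_apply :: "nat \<Rightarrow> (site \<Rightarrow> nat) \<Rightarrow> op \<Rightarrow> (config \<Rightarrow> complex) \<Rightarrow> config \<Rightarrow> complex" where
  "op_apply L d M v = (\<lambda>\<sigma>. \<Sum>\<tau>\<in>configs L d. M \<sigma> \<tau> * v \<tau>)"

definition l2_norm :: "nat \<Rightarrow> (site \<Rightarrow> nat) \<Rightarrow> (config \<Rightarrow> complex) \<Rightarrow> real" where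
  "l2_norm L d v = L2_set (\<lambda>\<tau>. cmod (v \<tau>)) (configs L d)"

lemma finite_sites [simp]: "finite (sites L)"
  by (simp add: sites_def)

lemma configs_eq_0_outside_sites: "\<sigma> \<in> configs L d \<Longrightarrow> x \<notin> sites L \<Longrightarrow> \<sigma> x = 0"
  unfolding configs_def by blast

lemma finite_configs [simp]: "finite (configs L d)"
proof -
  have "inj_on (\<lambda>\<sigma>. restrict \<sigma> (sites L)) (configs L d)"
  proof (rule inj_onI, rule ext)
    fix \<sigma> \<tau> x
    assume "\<sigma> \<in> configs L d" "\<tau> \<in> configs L d" "restrict \<sigma> (sites L) = restrict \<tau> (sites L)"
    then show "\<sigma> x = \<tau> x"
      by (metis restrict_apply' configs_eq_0_outside_sites)
  qed
  moreover have "(\<lambda>\<sigma>. restrict \<sigma> (sites L)) ` configs L d \<subseteq> PiE (sites L) (\<lambda>x. {..<d x})"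
    by (auto simp: configs_def)
  ultimately show ?thesis
    by (metis finite_PiE finite_lessThan finite_sites inj_on_finite)
qed

lemma l2_norm_nonneg [simp]: "0 \<le> l2_norm L d v"
  by (simp add: l2_norm_def)

lemma l2_norm_scale: "l2_norm L d (\<lambda>\<tau>. c * v \<tau>) = cmod c * l2_norm L d v"
  by (simp add: l2_norm_def norm_mult L2_set_right_distrib)

lemma l2_norm_add_le: "l2_norm L d (\<lambda>\<sigma>. g \<sigma> + h \<sigma>) \<le> l2_norm L d g + l2_norm L d h"
  unfolding l2_norm_def
  by (rule order_trans[OF L2_set_mono L2_set_triangle_ineq]) (simp_all add: norm_triangle_ineq)

lemma l2_norm_diff_le: "l2_norm L d (\<lambda>\<sigma>. g \<sigma> - h \<sigma>) \<le> l2_norm L d g + l2_norm L d h"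
  unfolding l2_norm_def
  by (rule order_trans[OF L2_set_mono L2_set_triangle_ineq]) (simp_all add: norm_triangle_ineq4)

lemma l2_norm_sum_le:
  "finite F \<Longrightarrow> l2_norm L d (\<lambda>\<sigma>. \<Sum>p\<in>F. g p \<sigma>) \<le> (\<Sum>p\<in>F. l2_norm L d (g p))"
proof (induction F rule: finite_induct)
  case empty
  then show ?case by (simp add: l2_norm_def L2_set_def)
next
  case (insert x F)
  then show ?case
    using l2_norm_add_le[of L d "g x" "\<lambda>\<sigma>. \<Sum>p\<in>F. g p \<sigma>"] by simp
qed

lemma op_norm_eq_Sup_l2_norm:
  "op_norm L d M = Sup {l2_norm L d (op_apply L d M v) | v. l2_norm L d v \<le> 1}"
  unfolding op_norm_def l2_norm_def op_apply_def L2_set_def by (simp add: norm_mult)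

text \<open>The Hilbert--Schmidt bound makes the supremum defining the operator norm finite.\<close>
lemma l2_norm_op_apply_le_hilbert_schmidt:
  "l2_norm L d (op_apply L d M v)
     \<le> L2_set (\<lambda>\<sigma>. L2_set (\<lambda>\<tau>. cmod (M \<sigma> \<tau>)) (configs L d)) (configs L d) * l2_norm L d v"
proof -
  let ?C = "configs L d"
  have row: "cmod (op_apply L d M v \<sigma>) \<le> L2_set (\<lambda>\<tau>. cmod (M \<sigma> \<tau>)) ?C * l2_norm L d v" for \<sigma>
  proof -
    have "cmod (op_apply L d M v \<sigma>) \<le> (\<Sum>\<tau>\<in>?C. \<bar>cmod (M \<sigma> \<tau>)\<bar> * \<bar>cmod (v \<tau>)\<bar>)"
      unfolding op_apply_def by (rule order_trans[OF norm_sum]) (simp add: norm_mult)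
    also have "\<dots> \<le> L2_set (\<lambda>\<tau>. cmod (M \<sigma> \<tau>)) ?C * l2_norm L d v"
      unfolding l2_norm_def by (rule L2_set_mult_ineq)
    finally show ?thesis .
  qed
  have "l2_norm L d (op_apply L d M v) \<le> L2_set (\<lambda>\<sigma>. L2_set (\<lambda>\<tau>. cmod (M \<sigma> \<tau>)) ?C * l2_norm L d v) ?C"
    unfolding l2_norm_def by (intro L2_set_mono) (auto simp: row[unfolded l2_norm_def])
  then show ?thesis
    by (simp add: L2_set_left_distrib l2_norm_def)
qed

lemma bdd_above_op_norm_set: "bdd_above {l2_norm L d (op_apply L d M v) | v. l2_norm L d v \<le> 1}"
proof (rule bdd_aboveI, safe)
  let ?B = "L2_set (\<lambda>\<sigma>. L2_set (\<lambda>\<tau>. cmod (M \<sigma> \<tau>)) (configs L d)) (configs L d)"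
  fix v assume "l2_norm L d v \<le> 1"
  then show "l2_norm L d (op_apply L d M v) \<le> ?B"
    using l2_norm_op_apply_le_hilbert_schmidt[of L d M v] by (smt (verit) L2_set_nonneg mult_left_le)
qed

lemma zero_in_op_norm_set: "0 \<in> {l2_norm L d (op_apply L d M v) | v. l2_norm L d v \<le> 1}"
  by (rule CollectI, rule exI[of _ "\<lambda>_. 0"]) (simp add: l2_norm_def op_apply_def L2_set_def)

lemma op_norm_nonneg: "0 \<le> op_norm L d M"
  unfolding op_norm_eq_Sup_l2_norm by (rule cSup_upper[OF zero_in_op_norm_set bdd_above_op_norm_set])

lemma op_norm_least:
  assumes "\<And>v. l2_norm L d v \<le> 1 \<Longrightarrow> l2_norm L d (op_apply L d M v) \<le> B"
  shows "op_norm L d M \<le> B"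
  unfolding op_norm_eq_Sup_l2_norm
proof (rule cSup_least)
  show "{l2_norm L d (op_apply L d M v) | v. l2_norm L d v \<le> 1} \<noteq> {}"
    using zero_in_op_norm_set by blast
qed (use assms in auto)

lemma l2_norm_op_apply_le: "l2_norm L d (op_apply L d M v) \<le> op_norm L d M * l2_norm L d v"
proof (cases "l2_norm L d v = 0")
  case True
  then have "op_apply L d M v = (\<lambda>_. 0)"
    by (simp add: l2_norm_def L2_set_eq_0_iff op_apply_def)
  then have "l2_norm L d (op_apply L d M v) = 0"
    by (simp add: l2_norm_def L2_set_def)
  then show ?thesis by (simp add: True)
next
  case False
  then have pos: "l2_norm L d v > 0"
    using l2_norm_nonneg[of L d v] by linarith
  define c where "c = complex_of_real (1 / l2_norm L d v)"
  have "op_apply L d M (\<lambda>\<tau>. c * v \<tau>) = (\<lambda>\<sigma>. c * op_apply L d M v \<sigma>)"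
    by (simp add: op_apply_def sum_distrib_left algebra_simps)
  moreover have "l2_norm L d (\<lambda>\<tau>. c * v \<tau>) = 1"
    unfolding l2_norm_scale using pos by (simp add: c_def norm_divide)
  ultimately have "l2_norm L d (\<lambda>\<sigma>. c * op_apply L d M v \<sigma>)
      \<in> {l2_norm L d (op_apply L d M v) | v. l2_norm L d v \<le> 1}"
    by (metis (mono_tags, lifting) mem_Collect_eq order_refl)
  then have "cmod c * l2_norm L d (op_apply L d M v) \<le> op_norm L d M"
    unfolding op_norm_eq_Sup_l2_norm l2_norm_scale by (rule cSup_upper[OF _ bdd_above_op_norm_set])
  then show ?thesis
    using pos by (simp add: c_def norm_divide divide_le_eq mult.commute)
qed

lemma op_apply_sum: "op_apply L d (\<lambda>\<sigma> \<tau>. \<Sum>p\<in>F. f p \<sigma> \<tau>) v = (\<lambda>\<sigma>. \<Sum>p\<in>F. op_apply L d (f p) v \<sigma>)"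
  unfolding op_apply_def sum_distrib_right by (rule ext, rule sum.swap)

lemma op_apply_op_mult: "op_apply L d (op_mult L d M N) v = op_apply L d M (op_apply L d N v)"
proof
  fix \<sigma>
  have "op_apply L d (op_mult L d M N) v \<sigma>
      = (\<Sum>\<tau>\<in>configs L d. \<Sum>\<rho>\<in>configs L d. M \<sigma> \<rho> * (N \<rho> \<tau> * v \<tau>))"
    by (simp add: op_apply_def op_mult_def sum_distrib_right mult.assoc)
  also have "\<dots> = (\<Sum>\<rho>\<in>configs L d. \<Sum>\<tau>\<in>configs L d. M \<sigma> \<rho> * (N \<rho> \<tau> * v \<tau>))"
    by (rule sum.swap)
  also have "\<dots> = op_apply L d M (op_apply L d N v) \<sigma>"
    by (simp add: op_apply_def sum_distrib_left)
  finally show "op_apply L d (op_mult L d M N) v \<sigma> = op_apply L d M (op_apply L d N v) \<sigma>" .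
qed

lemma op_norm_sum_le:
  assumes "finite F"
  shows "op_norm L d (\<lambda>\<sigma> \<tau>. \<Sum>p\<in>F. f p \<sigma> \<tau>) \<le> (\<Sum>p\<in>F. op_norm L d (f p))"
proof (rule op_norm_least)
  fix v assume v: "l2_norm L d v \<le> 1"
  have "l2_norm L d (op_apply L d (\<lambda>\<sigma> \<tau>. \<Sum>p\<in>F. f p \<sigma> \<tau>) v)
      \<le> (\<Sum>p\<in>F. l2_norm L d (op_apply L d (f p) v))"
    unfolding op_apply_sum using assms by (rule l2_norm_sum_le)
  also have "\<dots> \<le> (\<Sum>p\<in>F. op_norm L d (f p))"
  proof (rule sum_mono)
    fix p
    show "l2_norm L d (op_apply L d (f p) v) \<le> op_norm L d (f p)"
      using l2_norm_op_apply_le[of L d "f p" v] mult_left_le[OF v op_norm_nonneg[of L d "f p"]]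
      by linarith
  qed
  finally show "l2_norm L d (op_apply L d (\<lambda>\<sigma> \<tau>. \<Sum>p\<in>F. f p \<sigma> \<tau>) v) \<le> (\<Sum>p\<in>F. op_norm L d (f p))" .
qed

lemma op_norm_op_mult_le: "op_norm L d (op_mult L d M N) \<le> op_norm L d M * op_norm L d N"
proof (rule op_norm_least)
  fix v assume v: "l2_norm L d v \<le> 1"
  have "l2_norm L d (op_apply L d (op_mult L d M N) v) \<le> op_norm L d M * (op_norm L d N * l2_norm L d v)"
    unfolding op_apply_op_mult
    by (rule order_trans[OF l2_norm_op_apply_le mult_left_mono[OF l2_norm_op_apply_le op_norm_nonneg]])
  also have "\<dots> \<le> op_norm L d M * op_norm L d N"
    by (intro mult_left_mono mult_left_le v op_norm_nonneg)
  finally show "l2_norm L d (op_apply L d (op_mult L d M N) v) \<le> op_norm L d M * op_norm L d N" .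
qed

lemma op_norm_commutator_le: "op_norm L d (commutator L d M N) \<le> 2 * op_norm L d M * op_norm L d N"
proof (rule op_norm_least)
  fix v assume v: "l2_norm L d v \<le> 1"
  have product: "l2_norm L d (op_apply L d (op_mult L d P Q) v) \<le> op_norm L d P * op_norm L d Q" for P Q
    using l2_norm_op_apply_le[of L d "op_mult L d P Q" v] mult_left_le[OF v op_norm_nonneg[of L d "op_mult L d P Q"]]
      op_norm_op_mult_le[of L d P Q] by linarith
  have "op_apply L d (commutator L d M N) v
      = (\<lambda>\<sigma>. op_apply L d (op_mult L d M N) v \<sigma> - op_apply L d (op_mult L d N M) v \<sigma>)"
    unfolding op_apply_def commutator_def by (simp add: left_diff_distrib sum_subtractf)
  then have "l2_norm L d (op_apply L d (commutator L d M N) v)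
      \<le> l2_norm L d (op_apply L d (op_mult L d M N) v) + l2_norm L d (op_apply L d (op_mult L d N M) v)"
    by (simp add: l2_norm_diff_le)
  also have "\<dots> \<le> op_norm L d M * op_norm L d N + op_norm L d N * op_norm L d M"
    by (intro add_mono product)
  finally show "l2_norm L d (op_apply L d (commutator L d M N) v) \<le> 2 * op_norm L d M * op_norm L d N"
    by (simp add: algebra_simps)
qed

lemma supported_on_eq_0: "supported_on L d A M \<Longrightarrow> \<sigma> \<in> configs L d \<Longrightarrow> \<tau> \<in> configs L d \<Longrightarrow> x \<in> sites L \<Longrightarrow> x \<notin> A
  \<Longrightarrow> \<sigma> x \<noteq> \<tau> x \<Longrightarrow> M \<sigma> \<tau> = 0"
  unfolding supported_on_def by blast

lemma supported_on_eq: "supported_on L d A M \<Longrightarrow> \<sigma> \<in> configs L d \<Longrightarrow> \<tau> \<in> configs L d \<Longrightarrow> \<sigma>' \<in> configs L d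
  \<Longrightarrow> \<tau>' \<in> configs L d \<Longrightarrow> (\<And>x. x \<in> A \<Longrightarrow> \<sigma> x = \<sigma>' x \<and> \<tau> x = \<tau>' x)
  \<Longrightarrow> (\<And>x. x \<in> sites L \<Longrightarrow> x \<notin> A \<Longrightarrow> \<sigma> x = \<tau> x \<and> \<sigma>' x = \<tau>' x) \<Longrightarrow> M \<sigma> \<tau> = M \<sigma>' \<tau>'"
  unfolding supported_on_def by blast

lemma supported_onI:
  assumes "\<And>\<sigma> \<tau> x. \<sigma> \<in> configs L d \<Longrightarrow> \<tau> \<in> configs L d \<Longrightarrow> x \<in> sites L \<Longrightarrow> x \<notin> A
             \<Longrightarrow> \<sigma> x \<noteq> \<tau> x \<Longrightarrow> M \<sigma> \<tau> = 0"
  and "\<And>\<sigma> \<tau> \<sigma>' \<tau>'. \<sigma> \<in> configs L d \<Longrightarrow> \<tau> \<in> configs L d \<Longrightarrow> \<sigma>' \<in> configs L d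
  \<Longrightarrow> \<tau>' \<in> configs L d \<Longrightarrow> (\<And>x. x \<in> A \<Longrightarrow> \<sigma> x = \<sigma>' x \<and> \<tau> x = \<tau>' x)
  \<Longrightarrow> (\<And>x. x \<in> sites L \<Longrightarrow> x \<notin> A \<Longrightarrow> \<sigma> x = \<tau> x \<and> \<sigma>' x = \<tau>' x) \<Longrightarrow> M \<sigma> \<tau> = M \<sigma>' \<tau>'"
  shows "supported_on L d A M"
  unfolding supported_on_def using assms by blast

lemma supported_on_mono:
  assumes M: "supported_on L d A M" and AC: "A \<subseteq> C"
  shows "supported_on L d C M"
proof (rule supported_onI)
  fix \<sigma> \<tau> x assume "\<sigma> \<in> configs L d" "\<tau> \<in> configs L d" "x \<in> sites L" "x \<notin> C" "\<sigma> x \<noteq> \<tau> x"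
  then show "M \<sigma> \<tau> = 0" using supported_on_eq_0[OF M] AC by blast
next
  fix \<sigma> \<tau> \<sigma>' \<tau>'
  assume c: "\<sigma> \<in> configs L d" "\<tau> \<in> configs L d" "\<sigma>' \<in> configs L d" "\<tau>' \<in> configs L d"
    and onC: "\<And>x. x \<in> C \<Longrightarrow> \<sigma> x = \<sigma>' x \<and> \<tau> x = \<tau>' x"
    and offC: "\<And>x. x \<in> sites L \<Longrightarrow> x \<notin> C \<Longrightarrow> \<sigma> x = \<tau> x \<and> \<sigma>' x = \<tau>' x"
  show "M \<sigma> \<tau> = M \<sigma>' \<tau>'"
  proof (cases "\<exists>x\<in>sites L - A. \<sigma> x \<noteq> \<tau> x")
    case True
    then obtain x where x: "x \<in> sites L" "x \<notin> A" "\<sigma> x \<noteq> \<tau> x" by blast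
    have "x \<in> C" using offC x by blast
    then have "\<sigma>' x \<noteq> \<tau>' x" using onC x by metis
    then show ?thesis using supported_on_eq_0[OF M c(1,2) x(1,2,3)] supported_on_eq_0[OF M c(3,4) x(1,2)] by simp
  next
    case False
    show ?thesis
    proof (rule supported_on_eq[OF M c])
      fix x assume "x \<in> A" then show "\<sigma> x = \<sigma>' x \<and> \<tau> x = \<tau>' x" using onC AC by blast
    next
      fix x assume x: "x \<in> sites L" "x \<notin> A"
      then have "\<sigma> x = \<tau> x" using False by blast
      moreover have "\<sigma>' x = \<tau>' x" using onC offC x \<open>\<sigma> x = \<tau> x\<close> by metis
      ultimately show "\<sigma> x = \<tau> x \<and> \<sigma>' x = \<tau>' x" by blast
    qed
  qed
qed

lemma supported_on_sum:
  assumes "\<And>p. p \<in> F \<Longrightarrow> supported_on L d C (f p)"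
  shows "supported_on L d C (\<lambda>\<sigma> \<tau>. \<Sum>p\<in>F. f p \<sigma> \<tau>)"
proof (rule supported_onI)
  fix \<sigma> \<tau> x assume "\<sigma> \<in> configs L d" "\<tau> \<in> configs L d" "x \<in> sites L" "x \<notin> C" "\<sigma> x \<noteq> \<tau> x"
  then show "(\<Sum>p\<in>F. f p \<sigma> \<tau>) = 0" using supported_on_eq_0[OF assms] by (intro sum.neutral) blast
next
  fix \<sigma> \<tau> \<sigma>' \<tau>'
  assume c: "\<sigma> \<in> configs L d" "\<tau> \<in> configs L d" "\<sigma>' \<in> configs L d" "\<tau>' \<in> configs L d"
    and onC: "\<And>x. x \<in> C \<Longrightarrow> \<sigma> x = \<sigma>' x \<and> \<tau> x = \<tau>' x"
    and offC: "\<And>x. x \<in> sites L \<Longrightarrow> x \<notin> C \<Longrightarrow> \<sigma> x = \<tau> x \<and> \<sigma>' x = \<tau>' x"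
  show "(\<Sum>p\<in>F. f p \<sigma> \<tau>) = (\<Sum>p\<in>F. f p \<sigma>' \<tau>')"
    by (rule sum.cong[OF refl], rule supported_on_eq[OF assms c onC offC])
qed

lemma supported_on_diff:
  assumes "supported_on L d C M" "supported_on L d C N"
  shows "supported_on L d C (\<lambda>\<sigma> \<tau>. M \<sigma> \<tau> - N \<sigma> \<tau>)"
proof (rule supported_onI)
  fix \<sigma> \<tau> x assume "\<sigma> \<in> configs L d" "\<tau> \<in> configs L d" "x \<in> sites L" "x \<notin> C" "\<sigma> x \<noteq> \<tau> x"
  then show "M \<sigma> \<tau> - N \<sigma> \<tau> = 0" using supported_on_eq_0[OF assms(1)] supported_on_eq_0[OF assms(2)] by simp
next
  fix \<sigma> \<tau> \<sigma>' \<tau>'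
  assume c: "\<sigma> \<in> configs L d" "\<tau> \<in> configs L d" "\<sigma>' \<in> configs L d" "\<tau>' \<in> configs L d"
    and onC: "\<And>x. x \<in> C \<Longrightarrow> \<sigma> x = \<sigma>' x \<and> \<tau> x = \<tau>' x"
    and offC: "\<And>x. x \<in> sites L \<Longrightarrow> x \<notin> C \<Longrightarrow> \<sigma> x = \<tau> x \<and> \<sigma>' x = \<tau>' x"
  show "M \<sigma> \<tau> - N \<sigma> \<tau> = M \<sigma>' \<tau>' - N \<sigma>' \<tau>'"
    using supported_on_eq[OF assms(1) c onC offC] supported_on_eq[OF assms(2) c onC offC] by simp
qed

lemma op_mult_eq_sum_agreeing_outside:
  assumes M: "supported_on L d C M" and \<sigma>: "\<sigma> \<in> configs L d"
  shows "op_mult L d M N \<sigma> \<tau> = (\<Sum>\<rho>\<in>{\<rho>\<in>configs L d. \<forall>x\<in>sites L - C. \<rho> x = \<sigma> x}. M \<sigma> \<rho> * N \<rho> \<tau>)"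
  unfolding op_mult_def
proof (rule sum.mono_neutral_right)
  show "\<forall>\<rho>\<in>configs L d - {\<rho>\<in>configs L d. \<forall>x\<in>sites L - C. \<rho> x = \<sigma> x}. M \<sigma> \<rho> * N \<rho> \<tau> = 0"
    using supported_on_eq_0[OF M \<sigma>] by fastforce
qed auto

lemma supported_on_op_mult:
  assumes M: "supported_on L d C M" and N: "supported_on L d C N"
  shows "supported_on L d C (op_mult L d M N)"
proof (rule supported_onI)
  fix \<sigma> \<tau> x assume c: "\<sigma> \<in> configs L d" "\<tau> \<in> configs L d" and x: "x \<in> sites L" "x \<notin> C" "\<sigma> x \<noteq> \<tau> x"
  show "op_mult L d M N \<sigma> \<tau> = 0" unfolding op_mult_def
  proof (rule sum.neutral, rule ballI)
    fix \<rho> assume \<rho>: "\<rho> \<in> configs L d"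
    show "M \<sigma> \<rho> * N \<rho> \<tau> = 0"
    proof (cases "\<rho> x = \<sigma> x")
      case True then show ?thesis using supported_on_eq_0[OF N \<rho> c(2) x(1,2)] x(3) by simp
    next
      case False then show ?thesis using supported_on_eq_0[OF M c(1) \<rho> x(1,2)] by simp
    qed
  qed
next
  fix \<sigma> \<tau> \<sigma>' \<tau>'
  assume c: "\<sigma> \<in> configs L d" "\<tau> \<in> configs L d" "\<sigma>' \<in> configs L d" "\<tau>' \<in> configs L d"
    and onC: "\<And>x. x \<in> C \<Longrightarrow> \<sigma> x = \<sigma>' x \<and> \<tau> x = \<tau>' x"
    and offC: "\<And>x. x \<in> sites L \<Longrightarrow> x \<notin> C \<Longrightarrow> \<sigma> x = \<tau> x \<and> \<sigma>' x = \<tau>' x"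
  let ?h = "\<lambda>\<rho> x. if x \<in> C then \<rho> x else \<sigma>' x"
  let ?k = "\<lambda>\<rho> x. if x \<in> C then \<rho> x else \<sigma> x"
  have "(\<Sum>\<rho>\<in>{\<rho>\<in>configs L d. \<forall>x\<in>sites L - C. \<rho> x = \<sigma> x}. M \<sigma> \<rho> * N \<rho> \<tau>)
      = (\<Sum>\<rho>\<in>{\<rho>\<in>configs L d. \<forall>x\<in>sites L - C. \<rho> x = \<sigma>' x}. M \<sigma>' \<rho> * N \<rho> \<tau>')"
  proof (rule sum.reindex_bij_witness[of _ ?k ?h])
    fix \<rho> assume r: "\<rho> \<in> {\<rho>\<in>configs L d. \<forall>x\<in>sites L - C. \<rho> x = \<sigma> x}"
    then show "?k (?h \<rho>) = \<rho>"
      using c(1) by (intro ext, case_tac "x \<in> sites L") (auto simp: configs_def)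
    show "?h \<rho> \<in> {\<rho>\<in>configs L d. \<forall>x\<in>sites L - C. \<rho> x = \<sigma>' x}"
      using r c(3) by (auto simp: configs_def)
    have hr: "?h \<rho> \<in> configs L d" using r c(3) by (auto simp: configs_def)
    have "M \<sigma> \<rho> = M \<sigma>' (?h \<rho>)"
      by (rule supported_on_eq[OF M c(1) _ c(3) hr]) (use r onC in auto)
    moreover have "N \<rho> \<tau> = N (?h \<rho>) \<tau>'"
      by (rule supported_on_eq[OF N _ c(2) hr c(4)]) (use r onC offC in auto)
    ultimately show "M \<sigma>' (?h \<rho>) * N (?h \<rho>) \<tau>' = M \<sigma> \<rho> * N \<rho> \<tau>" by simp
  next
    fix \<rho> assume "\<rho> \<in> {\<rho>\<in>configs L d. \<forall>x\<in>sites L - C. \<rho> x = \<sigma>' x}"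
    then show "?h (?k \<rho>) = \<rho>"
      using c(3) by (intro ext, case_tac "x \<in> sites L") (auto simp: configs_def)
    show "?k \<rho> \<in> {\<rho>\<in>configs L d. \<forall>x\<in>sites L - C. \<rho> x = \<sigma> x}"
      using \<open>\<rho> \<in> _\<close> c(1) by (auto simp: configs_def)
  qed
  then show "op_mult L d M N \<sigma> \<tau> = op_mult L d M N \<sigma>' \<tau>'"
    using op_mult_eq_sum_agreeing_outside[OF M c(1)] op_mult_eq_sum_agreeing_outside[OF M c(3)] by simp
qed

lemma supported_on_commutator:
  assumes "supported_on L d C M" "supported_on L d C N"
  shows "supported_on L d C (commutator L d M N)"
  unfolding commutator_def
  by (intro supported_on_diff supported_on_op_mult assms)

lemma op_mult_disjoint_supports:
  assumes M: "supported_on L d A M" and N: "supported_on L d B N" and AB: "A \<inter> B = {}"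
    and c: "\<sigma> \<in> configs L d" "\<tau> \<in> configs L d"
  shows "op_mult L d M N \<sigma> \<tau> = M \<sigma> (\<lambda>x. if x \<in> A then \<tau> x else \<sigma> x) * N (\<lambda>x. if x \<in> A then \<tau> x else \<sigma> x) \<tau>"
proof -
  let ?r = "\<lambda>x. if x \<in> A then \<tau> x else \<sigma> x"
  have r: "?r \<in> configs L d" using c by (auto simp: configs_def)
  have "M \<sigma> \<rho> * N \<rho> \<tau> = 0" if \<rho>: "\<rho> \<in> configs L d" "\<rho> \<noteq> ?r" for \<rho>
  proof -
    obtain x where x: "\<rho> x \<noteq> ?r x" using \<rho>(2) by (meson ext)
    have xs: "x \<in> sites L"
      using x c \<rho>(1) configs_eq_0_outside_sites by (metis (full_types))
    show ?thesis
    proof (cases "x \<in> A")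
      case True
      then have "x \<notin> B" using AB by blast
      then show ?thesis using supported_on_eq_0[OF N \<rho>(1) c(2) xs] x True by simp
    next
      case False
      then show ?thesis using supported_on_eq_0[OF M c(1) \<rho>(1) xs] x by simp
    qed
  qed
  then show ?thesis
    unfolding op_mult_def using r by (subst sum.mono_neutral_right[where S = "{?r}"]) auto
qed

lemma commutator_disjoint_supports_eq_0:
  assumes M: "supported_on L d A M" and N: "supported_on L d B N" and AB: "A \<inter> B = {}"
    and c: "\<sigma> \<in> configs L d" "\<tau> \<in> configs L d"
  shows "commutator L d M N \<sigma> \<tau> = 0"
proof -
  let ?r1 = "\<lambda>x. if x \<in> A then \<tau> x else \<sigma> x"
  let ?r2 = "\<lambda>x. if x \<in> B then \<tau> x else \<sigma> x"
  have BA: "B \<inter> A = {}" using AB by blast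
  have r1: "?r1 \<in> configs L d" and r2: "?r2 \<in> configs L d" using c by (auto simp: configs_def)
  have e1: "op_mult L d M N \<sigma> \<tau> = M \<sigma> ?r1 * N ?r1 \<tau>" by (rule op_mult_disjoint_supports[OF M N AB c])
  have e2: "op_mult L d N M \<sigma> \<tau> = N \<sigma> ?r2 * M ?r2 \<tau>" by (rule op_mult_disjoint_supports[OF N M BA c])
  have "M \<sigma> ?r1 * N ?r1 \<tau> = N \<sigma> ?r2 * M ?r2 \<tau>"
  proof (cases "\<exists>x\<in>sites L. x \<notin> A \<and> x \<notin> B \<and> \<sigma> x \<noteq> \<tau> x")
    case True
    then obtain x where x: "x \<in> sites L" "x \<notin> A" "x \<notin> B" "\<sigma> x \<noteq> \<tau> x" by blast
    have "N ?r1 \<tau> = 0" by (rule supported_on_eq_0[OF N r1 c(2) x(1,3)]) (use x in simp)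
    moreover have "M ?r2 \<tau> = 0" by (rule supported_on_eq_0[OF M r2 c(2) x(1,2)]) (use x in simp)
    ultimately show ?thesis by simp
  next
    case False
    have "M \<sigma> ?r1 = M ?r2 \<tau>"
      by (rule supported_on_eq[OF M c(1) r1 r2 c(2)]) (use AB False in auto)
    moreover have "N ?r1 \<tau> = N \<sigma> ?r2"
      by (rule supported_on_eq[OF N r1 c(2) c(1) r2]) (use AB False in auto)
    ultimately show ?thesis by simp
  qed
  then show ?thesis unfolding commutator_def using e1 e2 by simp
qed

definition arc :: "nat \<Rightarrow> nat \<Rightarrow> nat \<Rightarrow> nat set" where
  "arc L r a = {(a + i) mod L | i. i < r}"

lemma block_eq_arc_times: "block L r x = arc L r (fst x) \<times> arc L r (snd x)"
  unfolding block_def arc_def by auto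

lemma arc_subset_arc:
  assumes "a mod L = (c + j) mod L" and "j + r \<le> n"
  shows "arc L r a \<subseteq> arc L n c"
proof
  fix y assume "y \<in> arc L r a"
  then obtain i where i: "i < r" "y = (a + i) mod L" by (auto simp: arc_def)
  then have "y = (c + (j + i)) mod L"
    using assms(1) by (metis add.assoc mod_add_left_eq)
  then show "y \<in> arc L n c"
    using i assms(2) unfolding arc_def by (intro CollectI exI[of _ "j + i"]) simp
qed

lemma arc_subset_arc_min: "0 < L \<Longrightarrow> arc L n c \<subseteq> arc L (min n L) c"
proof
  fix y assume "0 < L" "y \<in> arc L n c"
  then obtain i where "i < n" "y = (c + i) mod L" by (auto simp: arc_def)
  then have "i mod L < min n L" "y = (c + i mod L) mod L"
    using \<open>0 < L\<close> by (auto simp: mod_add_right_eq intro: le_less_trans[OF mod_less_eq_dividend])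
  then show "y \<in> arc L (min n L) c" unfolding arc_def by blast
qed

lemma overlapping_arcs_subset_arc:
  assumes L: "0 < L" and s: "s \<le> L" and overlap: "arc L r a \<inter> arc L s b \<noteq> {}"
  shows "\<exists>c<L. arc L r a \<union> arc L s b \<subseteq> arc L (min (r + s - 1) L) c"
proof -
  obtain i j where ij: "i < r" "j < s" "(a + i) mod L = (b + j) mod L"
    using overlap unfolding arc_def by blast
  define c where "c = (a + (L - j)) mod L"
  \<comment> \<open>the two arcs start \<open>j\<close> and \<open>i\<close> steps after \<open>c\<close>\<close>
  have "(c + j) mod L = (a + L) mod L"
    using ij(2) s by (simp add: c_def mod_add_left_eq)
  then have a: "a mod L = (c + j) mod L" by simp
  have "(c + i) mod L = ((a + i) + (L - j)) mod L"
    unfolding c_def mod_add_left_eq by (simp add: algebra_simps)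
  also have "\<dots> = ((b + j) + (L - j)) mod L"
    using ij(3) by (metis mod_add_left_eq)
  also have "\<dots> = b mod L"
    using ij(2) s by simp
  finally have b: "b mod L = (c + i) mod L" ..
  have "arc L r a \<union> arc L s b \<subseteq> arc L (r + s - 1) c"
    using arc_subset_arc[OF a] arc_subset_arc[OF b] ij by auto
  moreover have "c < L" using L by (simp add: c_def)
  ultimately show ?thesis
    using arc_subset_arc_min[OF L] by blast
qed

lemma finite_blocks [simp]: "finite (blocks L r)"
  by (simp add: blocks_def)

lemma blocksE:
  assumes "A \<in> blocks L r"
  obtains a where "r \<le> L" "a \<in> sites L" "A = block L r a"
  using assms by (auto simp: blocks_def split: if_splits)

lemma corner_in_block: "a \<in> sites L \<Longrightarrow> 0 < r \<Longrightarrow> a \<in> block L r a"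
  unfolding block_def sites_def by (cases a) force

lemma block_eq_image: "block L r a = (\<lambda>(i, j). ((fst a + i) mod L, (snd a + j) mod L)) ` ({..<r} \<times> {..<r})"
  unfolding block_def by auto

lemma finite_block [simp]: "finite (block L r a)"
  by (simp add: block_eq_image)

lemma card_block_le: "card (block L r a) \<le> r ^ 2"
proof -
  have "card (block L r a) \<le> card ({..<r} \<times> {..<r})"
    unfolding block_eq_image by (rule card_image_le) simp
  then show ?thesis
    by (simp add: card_cartesian_product power2_eq_square)
qed

lemma overlapping_blocks_merge:
  assumes A: "A \<in> blocks L r" and B: "B \<in> blocks L s" and overlap: "A \<inter> B \<noteq> {}"
  shows "\<exists>C \<in> blocks L (min (r + s - 1) L). A \<union> B \<subseteq> C"
proof -
  obtain a where a: "r \<le> L" "a \<in> sites L" "A = block L r a" using A by (rule blocksE)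
  obtain b where b: "s \<le> L" "b \<in> sites L" "B = block L s b" using B by (rule blocksE)
  have L: "0 < L" using a(2) by (auto simp: sites_def)
  have "arc L r (fst a) \<inter> arc L s (fst b) \<noteq> {}" "arc L r (snd a) \<inter> arc L s (snd b) \<noteq> {}"
    using overlap unfolding a(3) b(3) block_eq_arc_times by auto
  then obtain c1 c2 where c:
    "c1 < L" "arc L r (fst a) \<union> arc L s (fst b) \<subseteq> arc L (min (r + s - 1) L) c1"
    "c2 < L" "arc L r (snd a) \<union> arc L s (snd b) \<subseteq> arc L (min (r + s - 1) L) c2"
    using overlapping_arcs_subset_arc[OF L b(1)] by metis
  have "block L (min (r + s - 1) L) (c1, c2) \<in> blocks L (min (r + s - 1) L)"
    using c(1,3) by (auto simp: blocks_def sites_def)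
  moreover have "A \<union> B \<subseteq> block L (min (r + s - 1) L) (c1, c2)"
    using c(2,4) unfolding a(3) b(3) block_eq_arc_times by auto
  ultimately show ?thesis by blast
qed

definition decomp_index :: "nat \<Rightarrow> (nat \<times> site set) set" where
  "decomp_index L = (SIGMA r:{1..L}. blocks L r)"

definition overlapping_pairs :: "nat \<Rightarrow> ((nat \<times> site set) \<times> (nat \<times> site set)) set" where
  "overlapping_pairs L =
     {((r, A), (s, B)) | r A s B. (r, A) \<in> decomp_index L \<and> (s, B) \<in> decomp_index L \<and> A \<inter> B \<noteq> {}}"

text \<open>\<open>SOME\<close> is only evaluated on overlapping pairs, where a suitable block exists
  by \<open>overlapping_blocks_merge\<close>.\<close>
definition merge :: "nat \<Rightarrow> (nat \<times> site set) \<times> (nat \<times> site set) \<Rightarrow> nat \<times> site set" where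
  "merge L = (\<lambda>((r, A), (s, B)).
     (min (r + s - 1) L, SOME C. C \<in> blocks L (min (r + s - 1) L) \<and> A \<union> B \<subseteq> C))"

definition merged_pairs :: "nat \<Rightarrow> nat \<Rightarrow> site set \<Rightarrow> ((nat \<times> site set) \<times> (nat \<times> site set)) set" where
  "merged_pairs L R C = {p \<in> overlapping_pairs L. merge L p = (R, C)}"

lemma finite_decomp_index [simp]: "finite (decomp_index L)"
  by (simp add: decomp_index_def)

lemma mem_decomp_index [simp]: "(r, A) \<in> decomp_index L \<longleftrightarrow> r \<in> {1..L} \<and> A \<in> blocks L r"
  by (simp add: decomp_index_def)

lemma mem_overlapping_pairs [simp]:
  "((r, A), (s, B)) \<in> overlapping_pairs L \<longleftrightarrow>
     (r, A) \<in> decomp_index L \<and> (s, B) \<in> decomp_index L \<and> A \<inter> B \<noteq> {}"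
  by (simp add: overlapping_pairs_def)

lemma finite_overlapping_pairs [simp]: "finite (overlapping_pairs L)"
  by (rule finite_subset[of _ "decomp_index L \<times> decomp_index L"]) (auto simp: overlapping_pairs_def)

lemma finite_merged_pairs [simp]: "finite (merged_pairs L R C)"
  by (simp add: merged_pairs_def)

lemma merge_overlapping_pair:
  assumes "((r, A), (s, B)) \<in> overlapping_pairs L"
  shows "merge L ((r, A), (s, B)) \<in> decomp_index L" and "A \<union> B \<subseteq> snd (merge L ((r, A), (s, B)))"
proof -
  let ?R = "min (r + s - 1) L"
  have "\<exists>C. C \<in> blocks L ?R \<and> A \<union> B \<subseteq> C"
    using overlapping_blocks_merge[of A L r B s] assms by auto
  then have "(SOME C. C \<in> blocks L ?R \<and> A \<union> B \<subseteq> C) \<in> blocks L ?R \<and>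
      A \<union> B \<subseteq> (SOME C. C \<in> blocks L ?R \<and> A \<union> B \<subseteq> C)"
    by (rule someI_ex)
  moreover have "?R \<in> {1..L}" using assms by auto
  ultimately show "merge L ((r, A), (s, B)) \<in> decomp_index L" and "A \<union> B \<subseteq> snd (merge L ((r, A), (s, B)))"
    by (simp_all add: merge_def)
qed

lemma merged_pairsD:
  assumes "((r, A), (s, B)) \<in> merged_pairs L R C"
  shows "r \<in> {1..L}" "s \<in> {1..L}" "A \<in> blocks L r" "B \<in> blocks L s"
    and "A \<subseteq> C" "B \<subseteq> C" "R = min (r + s - 1) L"
  using assms merge_overlapping_pair(2)[of r A s B L]
  by (auto simp: merged_pairs_def merge_def)

lemma sum_inverse_squares_le: "1 \<le> n \<Longrightarrow> (\<Sum>r=1..n. 1 / real r ^ 2) \<le> 2 - 1 / real n"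
proof (induction n rule: dec_induct)
  case base
  then show ?case by simp
next
  case (step n)
  have "1 / real (Suc n) ^ 2 \<le> 1 / (real n * real (Suc n))"
    using step.hyps by (intro divide_left_mono) (auto simp: power2_eq_square)
  also have "\<dots> = 1 / real n - 1 / real (Suc n)"
    using step.hyps by (simp add: field_simps)
  finally show ?case
    using step.IH by simp
qed

lemma sum_inverse_powers_le_2:
  assumes "2 \<le> k"
  shows "(\<Sum>r=1..n. 1 / real r ^ k) \<le> 2"
proof (cases "1 \<le> n")
  case True
  have "(\<Sum>r=1..n. 1 / real r ^ k) \<le> (\<Sum>r=1..n. 1 / real r ^ 2)"
    using assms by (intro sum_mono divide_left_mono power_increasing) auto
  also have "\<dots> \<le> 2 - 1 / real n"
    using sum_inverse_squares_le[OF True] .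
  also have "\<dots> \<le> 2"
    by simp
  finally show ?thesis .
qed simp

lemma power4_add_le:
  fixes x y :: real
  shows "(x + y) ^ 4 \<le> 8 * (x ^ 4 + y ^ 4)"
proof -
  have "(x + y) ^ 2 \<le> 2 * (x ^ 2 + y ^ 2)"
    using zero_le_power2[of "x - y"] by (simp add: power2_eq_square algebra_simps)
  then have "(x + y) ^ 4 \<le> (2 * (x ^ 2 + y ^ 2)) ^ 2"
    using power_mono[of "(x + y) ^ 2" _ 2] by (simp add: power_mult[symmetric])
  also have "\<dots> = 8 * (x ^ 4 + y ^ 4) - 4 * (x ^ 2 - y ^ 2) ^ 2"
    by algebra
  also have "\<dots> \<le> 8 * (x ^ 4 + y ^ 4)"
    by simp
  finally show ?thesis .
qed

lemma card_merged_sizes_le: "1 \<le> r \<Longrightarrow> card {s \<in> {1..L}. min (r + s - 1) L = R} \<le> r"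
proof -
  assume r: "1 \<le> r"
  let ?T = "if R < L then {R + 1 - r} else {L + 1 - r..L}"
  have "{s \<in> {1..L}. min (r + s - 1) L = R} \<subseteq> ?T"
    by auto
  then have "card {s \<in> {1..L}. min (r + s - 1) L = R} \<le> card ?T"
    by (rule card_mono[rotated]) simp
  moreover have "card ?T \<le> r"
    using r by auto
  ultimately show ?thesis
    by linarith
qed

lemma merged_sizes_weight_sum_le:
  "(\<Sum>r=1..L. \<Sum>s\<in>{s \<in> {1..L}. min (r + s - 1) L = R}. real R ^ 4 / (real r * real s) ^ 4) \<le> 32"
proof -
  let ?S = "\<lambda>r. {s \<in> {1..L}. min (r + s - 1) L = R}"
  have split: "real R ^ 4 / (real r * real s) ^ 4 \<le> 8 / real r ^ 4 + 8 / real s ^ 4"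
    if "1 \<le> r" "1 \<le> s" "R \<le> r + s" for r s
  proof -
    have "real R \<le> real r + real s"
      using that by simp
    then have "real R ^ 4 \<le> (real r + real s) ^ 4"
      by (rule power_mono) simp
    then have "real R ^ 4 \<le> 8 * (real r ^ 4 + real s ^ 4)"
      using power4_add_le[of "real r" "real s"] by linarith
    then show ?thesis
      using that by (simp add: field_simps)
  qed
  have first: "(\<Sum>r=1..L. \<Sum>s\<in>?S r. 1 / real r ^ 4) \<le> 2"
  proof -
    have "(\<Sum>r=1..L. \<Sum>s\<in>?S r. 1 / real r ^ 4) \<le> (\<Sum>r=1..L. real r / real r ^ 4)"
      using card_merged_sizes_le by (intro sum_mono) (simp add: divide_right_mono)
    also have "\<dots> = (\<Sum>r=1..L. 1 / real r ^ 3)"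
      by (intro sum.cong) (auto simp: field_simps power_eq_if)
    also have "\<dots> \<le> 2"
      by (rule sum_inverse_powers_le_2) simp
    finally show ?thesis .
  qed
  have "(\<Sum>r=1..L. \<Sum>s\<in>?S r. 1 / real s ^ 4) = (\<Sum>s=1..L. \<Sum>r\<in>{r \<in> {1..L}. min (r + s - 1) L = R}. 1 / real s ^ 4)"
    by (rule sum.swap_restrict) simp_all
  also have "\<dots> = (\<Sum>r=1..L. \<Sum>s\<in>?S r. 1 / real r ^ 4)"
    by (simp add: add.commute)
  finally have second: "(\<Sum>r=1..L. \<Sum>s\<in>?S r. 1 / real s ^ 4) \<le> 2"
    using first by simp
  have "(\<Sum>r=1..L. \<Sum>s\<in>?S r. real R ^ 4 / (real r * real s) ^ 4)
      \<le> (\<Sum>r=1..L. \<Sum>s\<in>?S r. 8 / real r ^ 4 + 8 / real s ^ 4)"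
    by (intro sum_mono split) auto
  also have "\<dots> = 8 * (\<Sum>r=1..L. \<Sum>s\<in>?S r. 1 / real r ^ 4) + 8 * (\<Sum>r=1..L. \<Sum>s\<in>?S r. 1 / real s ^ 4)"
    by (simp only: sum.distrib sum_distrib_left times_divide_eq_right mult_1_right)
  also have "\<dots> \<le> 32"
    using first second by simp
  finally show ?thesis .
qed

lemma merged_pairs_subset_image_corners:
  "merged_pairs L R C \<subseteq> (\<lambda>((r, s), (a, b)). ((r, block L r a), (s, block L s b))) `
     ((SIGMA r:{1..L}. {s \<in> {1..L}. min (r + s - 1) L = R}) \<times> (C \<times> C))"
proof (clarify)
  fix r A s B assume p: "((r, A), (s, B)) \<in> merged_pairs L R C"
  note m = merged_pairsD[OF p]
  obtain a b where "a \<in> sites L" "A = block L r a" "b \<in> sites L" "B = block L s b"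
    using m(3,4) by (metis blocksE)
  moreover have "a \<in> C" "b \<in> C"
    using calculation m corner_in_block[of a L r] corner_in_block[of b L s] by auto
  ultimately show "((r, A), (s, B)) \<in> (\<lambda>((r, s), (a, b)). ((r, block L r a), (s, block L s b))) `
      ((SIGMA r:{1..L}. {s \<in> {1..L}. min (r + s - 1) L = R}) \<times> (C \<times> C))"
    using m by (intro image_eqI[of _ _ "((r, s), (a, b))"]) auto
qed

lemma merged_pairs_weight_le:
  assumes C: "C \<in> blocks L R"
  shows "(\<Sum>((r, A), (s, B))\<in>merged_pairs L R C. 1 / (real r * real s) ^ 4) \<le> 32"
proof -
  let ?Q = "SIGMA r:{1..L}. {s \<in> {1..L}. min (r + s - 1) L = R}"
  let ?pair = "\<lambda>((r, s), (a, b)). ((r, block L r a), (s, block L s b))"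
  let ?weight = "\<lambda>((r, A), (s, B)). 1 / (real r * real s) ^ 4"
  obtain c where "C = block L R c" using C by (rule blocksE)
  then have "card C ^ 2 \<le> (R ^ 2) ^ 2"
    using card_block_le[of L R c] by (intro power_mono) auto
  then have card_C: "real (card C) ^ 2 \<le> real R ^ 4"
    by (metis of_nat_le_iff of_nat_power power_mult[symmetric] num_double numeral_times_numeral)
  have finite: "finite (?Q \<times> (C \<times> C))"
    using C by (auto elim: blocksE)
  have "sum ?weight (merged_pairs L R C) \<le> sum ?weight (?pair ` (?Q \<times> (C \<times> C)))"
    using finite merged_pairs_subset_image_corners by (intro sum_mono2) auto
  also have "\<dots> \<le> sum (?weight \<circ> ?pair) (?Q \<times> (C \<times> C))"
    using finite by (intro sum_image_le) auto
  also have "\<dots> = (\<Sum>((r, s), _)\<in>?Q \<times> (C \<times> C). 1 / (real r * real s) ^ 4)"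
    by (rule sum.cong) auto
  also have "\<dots> = (\<Sum>(r, s)\<in>?Q. real (card C) ^ 2 * (1 / (real r * real s) ^ 4))"
    by (subst sum.cartesian_product[symmetric]) (simp add: card_cartesian_product power2_eq_square case_prod_beta)
  also have "\<dots> \<le> (\<Sum>(r, s)\<in>?Q. real R ^ 4 / (real r * real s) ^ 4)"
    using card_C by (intro sum_mono) (simp add: case_prod_beta divide_right_mono)
  also have "\<dots> = (\<Sum>r=1..L. \<Sum>s\<in>{s \<in> {1..L}. min (r + s - 1) L = R}. real R ^ 4 / (real r * real s) ^ 4)"
    by (rule sum.Sigma[symmetric]) auto
  also have "\<dots> \<le> 32"
    by (rule merged_sizes_weight_sum_le)
  finally show ?thesis .
qed

lemma op_mult_sum_sum:
  assumes M: "\<And>\<sigma> \<tau>. \<sigma> \<in> configs L d \<Longrightarrow> \<tau> \<in> configs L d \<Longrightarrow> M \<sigma> \<tau> = (\<Sum>i\<in>I. f i \<sigma> \<tau>)"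
    and N: "\<And>\<sigma> \<tau>. \<sigma> \<in> configs L d \<Longrightarrow> \<tau> \<in> configs L d \<Longrightarrow> N \<sigma> \<tau> = (\<Sum>j\<in>J. g j \<sigma> \<tau>)"
    and \<sigma>: "\<sigma> \<in> configs L d" and \<tau>: "\<tau> \<in> configs L d"
  shows "op_mult L d M N \<sigma> \<tau> = (\<Sum>i\<in>I. \<Sum>j\<in>J. op_mult L d (f i) (g j) \<sigma> \<tau>)"
proof -
  have "op_mult L d M N \<sigma> \<tau> = (\<Sum>\<rho>\<in>configs L d. \<Sum>i\<in>I. \<Sum>j\<in>J. f i \<sigma> \<rho> * g j \<rho> \<tau>)"
    unfolding op_mult_def using M[OF \<sigma>] N[OF _ \<tau>] by (simp add: sum_product)
  also have "\<dots> = (\<Sum>i\<in>I. \<Sum>\<rho>\<in>configs L d. \<Sum>j\<in>J. f i \<sigma> \<rho> * g j \<rho> \<tau>)"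
    by (rule sum.swap)
  also have "\<dots> = (\<Sum>i\<in>I. \<Sum>j\<in>J. \<Sum>\<rho>\<in>configs L d. f i \<sigma> \<rho> * g j \<rho> \<tau>)"
    by (rule sum.cong[OF refl], rule sum.swap)
  finally show ?thesis
    unfolding op_mult_def .
qed

lemma commutator_sum_sum:
  assumes "\<And>\<sigma> \<tau>. \<sigma> \<in> configs L d \<Longrightarrow> \<tau> \<in> configs L d \<Longrightarrow> M \<sigma> \<tau> = (\<Sum>i\<in>I. f i \<sigma> \<tau>)"
    and "\<And>\<sigma> \<tau>. \<sigma> \<in> configs L d \<Longrightarrow> \<tau> \<in> configs L d \<Longrightarrow> N \<sigma> \<tau> = (\<Sum>j\<in>J. g j \<sigma> \<tau>)"
    and "\<sigma> \<in> configs L d" and "\<tau> \<in> configs L d"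
  shows "commutator L d M N \<sigma> \<tau> = (\<Sum>(i, j)\<in>I \<times> J. commutator L d (f i) (g j) \<sigma> \<tau>)"
proof -
  have "commutator L d M N \<sigma> \<tau>
      = (\<Sum>i\<in>I. \<Sum>j\<in>J. op_mult L d (f i) (g j) \<sigma> \<tau>) - (\<Sum>j\<in>J. \<Sum>i\<in>I. op_mult L d (g j) (f i) \<sigma> \<tau>)"
    unfolding commutator_def using op_mult_sum_sum[OF assms] op_mult_sum_sum[OF assms(2,1,3,4)] by simp
  also have "\<dots> = (\<Sum>i\<in>I. \<Sum>j\<in>J. commutator L d (f i) (g j) \<sigma> \<tau>)"
    unfolding commutator_def sum.swap[of _ J] by (simp add: sum_subtractf)
  finally show ?thesis
    by (simp add: sum.cartesian_product)
qed

lemma local_decomp_sum: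
  assumes "local_decomp L d W V" and "\<sigma> \<in> configs L d" and "\<tau> \<in> configs L d"
  shows "V \<sigma> \<tau> = (\<Sum>(r, A)\<in>decomp_index L. W r A \<sigma> \<tau>)"
  using assms unfolding local_decomp_def decomp_index_def by (simp add: sum.Sigma)

definition pair_commutator :: "nat \<Rightarrow> (site \<Rightarrow> nat) \<Rightarrow> (nat \<Rightarrow> site set \<Rightarrow> op) \<Rightarrow> (nat \<Rightarrow> site set \<Rightarrow> op)
    \<Rightarrow> (nat \<times> site set) \<times> (nat \<times> site set) \<Rightarrow> op" where
  "pair_commutator L d W1 W2 = (\<lambda>((r, A), (s, B)). commutator L d (W1 r A) (W2 s B))"

definition commutator_decomp :: "nat \<Rightarrow> (site \<Rightarrow> nat) \<Rightarrow> (nat \<Rightarrow> site set \<Rightarrow> op) \<Rightarrow> (nat \<Rightarrow> site set \<Rightarrow> op)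
    \<Rightarrow> nat \<Rightarrow> site set \<Rightarrow> op" where
  "commutator_decomp L d W1 W2 R C = (\<lambda>\<sigma> \<tau>. \<Sum>p\<in>merged_pairs L R C. pair_commutator L d W1 W2 p \<sigma> \<tau>)"

lemma commutator_eq_sum_overlapping_pairs:
  assumes S: "local_decomp L d W1 S" and V: "local_decomp L d W2 V"
    and \<sigma>: "\<sigma> \<in> configs L d" and \<tau>: "\<tau> \<in> configs L d"
  shows "commutator L d S V \<sigma> \<tau> = (\<Sum>p\<in>overlapping_pairs L. pair_commutator L d W1 W2 p \<sigma> \<tau>)"
proof -
  have "commutator L d S V \<sigma> \<tau> = (\<Sum>p\<in>decomp_index L \<times> decomp_index L. pair_commutator L d W1 W2 p \<sigma> \<tau>)"
    using commutator_sum_sum[where I = "decomp_index L" and f = "\<lambda>(r, A). W1 r A"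
        and J = "decomp_index L" and g = "\<lambda>(s, B). W2 s B"]
      local_decomp_sum[OF S] local_decomp_sum[OF V] \<sigma> \<tau>
    by (simp add: pair_commutator_def case_prod_beta)
  also have "\<dots> = (\<Sum>p\<in>overlapping_pairs L. pair_commutator L d W1 W2 p \<sigma> \<tau>)"
  proof (rule sum.mono_neutral_right)
    show "overlapping_pairs L \<subseteq> decomp_index L \<times> decomp_index L"
      by (auto simp: overlapping_pairs_def)
    show "\<forall>p\<in>decomp_index L \<times> decomp_index L - overlapping_pairs L. pair_commutator L d W1 W2 p \<sigma> \<tau> = 0"
    proof
      fix p assume p: "p \<in> decomp_index L \<times> decomp_index L - overlapping_pairs L"
      obtain r A s B where pp: "p = ((r, A), (s, B))" by (cases p) auto
      have "supported_on L d A (W1 r A)" "supported_on L d B (W2 s B)" "A \<inter> B = {}"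
        using p S V unfolding pp by (auto simp: local_decomp_def)
      then show "pair_commutator L d W1 W2 p \<sigma> \<tau> = 0"
        unfolding pp pair_commutator_def using commutator_disjoint_supports_eq_0 \<sigma> \<tau> by simp
    qed
  qed simp
  finally show ?thesis .
qed

lemma commutator_local_decomp:
  assumes S: "local_decomp L d W1 S" and V: "local_decomp L d W2 V"
  shows "local_decomp L d (commutator_decomp L d W1 W2) (commutator L d S V)"
  unfolding local_decomp_def
proof (intro conjI allI impI ballI)
  fix R C assume "C \<in> blocks L R"
  show "supported_on L d C (commutator_decomp L d W1 W2 R C)"
    unfolding commutator_decomp_def
  proof (rule supported_on_sum, clarify)
    fix r A s B assume p: "((r, A), (s, B)) \<in> merged_pairs L R C"
    note m = merged_pairsD[OF p]
    have "supported_on L d A (W1 r A)" "supported_on L d B (W2 s B)"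
      using S V m by (auto simp: local_decomp_def)
    then show "supported_on L d C (pair_commutator L d W1 W2 ((r, A), (s, B)))"
      unfolding pair_commutator_def using m by (auto intro: supported_on_commutator supported_on_mono)
  qed
next
  fix \<sigma> \<tau> assume \<sigma>: "\<sigma> \<in> configs L d" and \<tau>: "\<tau> \<in> configs L d"
  have "commutator L d S V \<sigma> \<tau> = (\<Sum>p\<in>overlapping_pairs L. pair_commutator L d W1 W2 p \<sigma> \<tau>)"
    by (rule commutator_eq_sum_overlapping_pairs[OF S V \<sigma> \<tau>])
  also have "\<dots> = (\<Sum>(R, C)\<in>decomp_index L. commutator_decomp L d W1 W2 R C \<sigma> \<tau>)"
  proof -
    have "merge L ` overlapping_pairs L \<subseteq> decomp_index L"
      using merge_overlapping_pair(1) by force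
    then show ?thesis
      unfolding commutator_decomp_def merged_pairs_def
      by (subst sum.group[symmetric, where g = "merge L" and T = "decomp_index L"]) (auto simp: case_prod_beta)
  qed
  also have "\<dots> = (\<Sum>R=1..L. \<Sum>C\<in>blocks L R. commutator_decomp L d W1 W2 R C \<sigma> \<tau>)"
    unfolding decomp_index_def by (simp add: sum.Sigma)
  finally show "commutator L d S V \<sigma> \<tau> = (\<Sum>R=1..L. \<Sum>C\<in>blocks L R. commutator_decomp L d W1 W2 R C \<sigma> \<tau>)" .
qed

lemma decaying_decomp_nonneg:
  assumes "decaying_decomp L d W K \<mu> \<alpha>" and "1 \<le> r" and "A \<in> blocks L r"
  shows "0 \<le> K"
proof -
  have "0 \<le> op_norm L d (W r A) * real r powr \<alpha> * exp (\<mu> * real r)"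
    by (intro mult_nonneg_nonneg op_norm_nonneg) auto
  also have "\<dots> \<le> K"
    using assms unfolding decaying_decomp_def by blast
  finally show ?thesis .
qed

lemma decaying_decomp_power4:
  assumes D: "decaying_decomp L d W K \<mu> \<alpha>" and "4 \<le> \<alpha>" and r: "1 \<le> r" and "A \<in> blocks L r"
  shows "op_norm L d (W r A) * real r ^ 4 * exp (\<mu> * real r) \<le> K"
proof -
  have "real r ^ 4 = real r powr 4"
    using r by (simp add: powr_realpow)
  also have "\<dots> \<le> real r powr \<alpha>"
    using assms by (intro powr_mono) auto
  finally have "real r ^ 4 \<le> real r powr \<alpha>" .
  then have "op_norm L d (W r A) * real r ^ 4 * exp (\<mu> * real r)
      \<le> op_norm L d (W r A) * real r powr \<alpha> * exp (\<mu> * real r)"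
    by (intro mult_right_mono mult_left_mono op_norm_nonneg) auto
  also have "\<dots> \<le> K"
    using assms unfolding decaying_decomp_def by blast
  finally show ?thesis .
qed

lemma pair_commutator_decay:
  assumes D1: "decaying_decomp L d W1 K \<mu> \<alpha>" and D2: "decaying_decomp L d W2 J \<mu> \<beta>"
    and \<alpha>: "4 \<le> \<alpha>" and \<beta>: "4 \<le> \<beta>" and \<mu>: "0 \<le> \<mu>"
    and r: "1 \<le> r" "A \<in> blocks L r" and s: "1 \<le> s" "B \<in> blocks L s" and R: "R \<le> r + s"
  shows "op_norm L d (pair_commutator L d W1 W2 ((r, A), (s, B))) * exp (\<mu> * real R)
    \<le> 2 * K * J / (real r * real s) ^ 4"
proof -
  define x where "x = op_norm L d (W1 r A) * real r ^ 4 * exp (\<mu> * real r)"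
  define y where "y = op_norm L d (W2 s B) * real s ^ 4 * exp (\<mu> * real s)"
  have "x * y \<le> K * J"
    unfolding x_def y_def
    by (intro mult_mono decaying_decomp_power4[OF D1 \<alpha> r] decaying_decomp_power4[OF D2 \<beta> s]
        decaying_decomp_nonneg[OF D1 r] mult_nonneg_nonneg op_norm_nonneg) auto
  have "op_norm L d (pair_commutator L d W1 W2 ((r, A), (s, B))) * exp (\<mu> * real R)
      \<le> (2 * op_norm L d (W1 r A) * op_norm L d (W2 s B)) * exp (\<mu> * real (r + s))"
  proof (rule mult_mono)
    show "op_norm L d (pair_commutator L d W1 W2 ((r, A), (s, B))) \<le> 2 * op_norm L d (W1 r A) * op_norm L d (W2 s B)"
      unfolding pair_commutator_def by simp (rule op_norm_commutator_le)
    show "exp (\<mu> * real R) \<le> exp (\<mu> * real (r + s))"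
      using R \<mu> by (simp add: mult_left_mono)
  qed (simp_all add: op_norm_nonneg)
  also have "\<dots> = 2 * (x * y) / (real r * real s) ^ 4"
    using r s by (simp add: x_def y_def exp_add field_simps)
  also have "\<dots> \<le> 2 * K * J / (real r * real s) ^ 4"
    using \<open>x * y \<le> K * J\<close> by (simp add: divide_right_mono)
  finally show ?thesis .
qed

lemma commutator_decomp_decaying:
  assumes D1: "decaying_decomp L d W1 K \<mu> \<alpha>" and D2: "decaying_decomp L d W2 J \<mu> \<beta>"
    and \<alpha>: "4 \<le> \<alpha>" and \<beta>: "4 \<le> \<beta>" and \<mu>: "0 \<le> \<mu>"
  shows "decaying_decomp L d (commutator_decomp L d W1 W2) (64 * K * J) \<mu> 0"
  unfolding decaying_decomp_def
proof (intro allI impI ballI)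
  fix R C assume R: "1 \<le> R" and C: "C \<in> blocks L R"
  have KJ: "0 \<le> 2 * K * J"
    using decaying_decomp_nonneg[OF D1 R C] decaying_decomp_nonneg[OF D2 R C] by (intro mult_nonneg_nonneg) auto
  have "op_norm L d (commutator_decomp L d W1 W2 R C) * exp (\<mu> * real R)
      \<le> (\<Sum>p\<in>merged_pairs L R C. op_norm L d (pair_commutator L d W1 W2 p)) * exp (\<mu> * real R)"
    unfolding commutator_decomp_def by (intro mult_right_mono op_norm_sum_le) auto
  also have "\<dots> = (\<Sum>p\<in>merged_pairs L R C. op_norm L d (pair_commutator L d W1 W2 p) * exp (\<mu> * real R))"
    by (simp add: sum_distrib_right)
  also have "\<dots> \<le> (\<Sum>((r, A), (s, B))\<in>merged_pairs L R C. 2 * K * J / (real r * real s) ^ 4)"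
  proof (rule sum_mono)
    fix p assume p: "p \<in> merged_pairs L R C"
    obtain r A s B where pp: "p = ((r, A), (s, B))" by (cases p) auto
    note m = merged_pairsD[OF p[unfolded pp]]
    have "op_norm L d (pair_commutator L d W1 W2 ((r, A), (s, B))) * exp (\<mu> * real R)
        \<le> 2 * K * J / (real r * real s) ^ 4"
      using m by (intro pair_commutator_decay[OF D1 D2 \<alpha> \<beta> \<mu>]) auto
    then show "op_norm L d (pair_commutator L d W1 W2 p) * exp (\<mu> * real R)
        \<le> (\<lambda>((r, A), (s, B)). 2 * K * J / (real r * real s) ^ 4) p"
      by (simp add: pp)
  qed
  also have "\<dots> = 2 * K * J * (\<Sum>((r, A), (s, B))\<in>merged_pairs L R C. 1 / (real r * real s) ^ 4)"
    by (simp add: sum_distrib_left case_prod_beta)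
  also have "\<dots> \<le> 2 * K * J * 32"
    using merged_pairs_weight_le[OF C] KJ by (rule mult_left_mono)
  finally show "op_norm L d (commutator_decomp L d W1 W2 R C) * real R powr 0 * exp (\<mu> * real R)
      \<le> 64 * K * J"
    using R by simp
qed

theorem lemma5:
  fixes \<alpha> \<beta> :: real
  assumes "\<alpha> \<ge> 4" and "\<beta> \<ge> 4"
  shows "\<exists>c::real. \<forall>(L::nat) (d::site \<Rightarrow> nat) (K::real) (J::real) (\<mu>::real) (S::op) (V::op).
           \<mu> \<ge> 0 \<longrightarrow> decaying L d S K \<mu> \<alpha> \<longrightarrow> decaying L d V J \<mu> \<beta> \<longrightarrow>
           decaying L d (commutator L d S V) (c * K * J) \<mu> 0"
proof (intro exI allI impI)
  fix L d K J \<mu> S V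
  assume \<mu>: "(\<mu>::real) \<ge> 0" and "decaying L d S K \<mu> \<alpha>" and "decaying L d V J \<mu> \<beta>"
  then obtain W1 W2 where
    S: "local_decomp L d W1 S" "decaying_decomp L d W1 K \<mu> \<alpha>" and
    V: "local_decomp L d W2 V" "decaying_decomp L d W2 J \<mu> \<beta>"
    unfolding decaying_def by blast
  have "local_decomp L d (commutator_decomp L d W1 W2) (commutator L d S V)"
    using S(1) V(1) by (rule commutator_local_decomp)
  moreover have "decaying_decomp L d (commutator_decomp L d W1 W2) (64 * K * J) \<mu> 0"
    using S(2) V(2) assms \<mu> by (rule commutator_decomp_decaying)
  ultimately show "decaying L d (commutator L d S V) (64 * K * J) \<mu> 0"
    unfolding decaying_def by blast
qed

end
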